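(* Let $G$ be a persistent graph with vertex order $<$. If four vertices $p_1,p_2,p_3,p_4$ of $G$ form an induced $4$-cycle in this order (edges $\{p_1,p_2\},\{p_2,p_3\},\{p_3,p_4\},\{p_4,p_1\}$ and no others among them), then the two leftmost (with respect to $<$) of these four vertices are either $p_1$ and $p_3$, or $p_2$ and $p_4$.
   Context: A persistent graph is a graph $G$ together with a linear order $v_1<v_2<\dots<v_n$ on $V(G)$ such that (1) $\{v_i,v_{i+1}\}\in E(G)$ for all $i$; (2) X-property: for all $p<q<r<s$, if $\{p,r\}\in E(G)$ and $\{q,s\}\in E(G)$ then $\{p,s\}\in E(G)$; (3) bar-property: if $\{p,q\}\in E(G)$ and $p,q$ are not consecutive in the order, then there is a vertex $r$ with $p<r<q$ adjacent to both $p$ and $q$. *)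

theory Defs
  imports Main
begin

text \<open>A simple graph on a finite vertex set V of a linearly ordered type; the
linear order on V is the restriction of the type's order. E is a symmetric,
irreflexive edge relation with all edges inside V.\<close>

definition simple_graph :: "'a set \<Rightarrow> ('a \<Rightarrow> 'a \<Rightarrow> bool) \<Rightarrow> bool" where
  "simple_graph V E \<longleftrightarrow> finite V \<and> (\<forall>x y. E x y \<longrightarrow> x \<in> V \<and> y \<in> V)
     \<and> (\<forall>x y. E x y \<longrightarrow> E y x) \<and> (\<forall>x. \<not> E x x)"

definition consecutive :: "'a::linorder set \<Rightarrow> 'a \<Rightarrow> 'a \<Rightarrow> bool" where
  "consecutive V x y \<longleftrightarrow> x \<in> V \<and> y \<in> V \<and> x < y \<and> \<not> (\<exists>z\<in>V. x < z \<and> z < y)"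

definition persistent_graph :: "'a::linorder set \<Rightarrow> ('a \<Rightarrow> 'a \<Rightarrow> bool) \<Rightarrow> bool" where
  "persistent_graph V E \<longleftrightarrow> simple_graph V E
     \<and> (\<forall>x y. consecutive V x y \<longrightarrow> E x y)
     \<and> (\<forall>p\<in>V. \<forall>q\<in>V. \<forall>r\<in>V. \<forall>s\<in>V. p < q \<and> q < r \<and> r < s \<and> E p r \<and> E q s \<longrightarrow> E p s)
     \<and> (\<forall>p q. E p q \<and> p < q \<and> \<not> consecutive V p q \<longrightarrow> (\<exists>r\<in>V. p < r \<and> r < q \<and> E p r \<and> E r q))"

definition induced_C4 :: "('a \<Rightarrow> 'a \<Rightarrow> bool) \<Rightarrow> 'a \<Rightarrow> 'a \<Rightarrow> 'a \<Rightarrow> 'a \<Rightarrow> bool" where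
  "induced_C4 E p1 p2 p3 p4 \<longleftrightarrow> distinct [p1, p2, p3, p4]
     \<and> E p1 p2 \<and> E p2 p3 \<and> E p3 p4 \<and> E p4 p1 \<and> \<not> E p1 p3 \<and> \<not> E p2 p4"

definition two_leftmost :: "'a::linorder set \<Rightarrow> 'a \<Rightarrow> 'a \<Rightarrow> bool" where
  "two_leftmost P a b \<longleftrightarrow> a \<in> P \<and> b \<in> P \<and> a \<noteq> b \<and> (\<forall>c\<in>P - {a, b}. a < c \<and> b < c)"

end

theory Submission
  imports Defs
begin

(* Call a finite set S with least element a and greatest element b a monotone path from a to b if
   elements consecutive in S are adjacent. The core fact: if a and b are adjacent and S has an inner
   vertex, some inner vertex of S is adjacent to both a and b. Induct on the number of vertices in
   [a, b]. Deleting the vertices under chords makes S an induced cycle through the edge ab. The bar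
   property gives a common neighbour r of a and b, and the X-property puts r before the second
   vertex q or after the second-to-last vertex p of the cycle. In the latter case let t be the
   first neighbour of a after p; the cycle up to p followed by all vertices of the graph from p to t
   is a monotone path from a to t, and the X-property shows that none of its inner vertices is
   adjacent to both a and t, contradicting the induction hypothesis.
   For an induced 4-cycle a b c d with a leftmost this rules out a < b < c < d, and the X-property
   rules out a < b < d < c; so neither b nor, by reflection, d is second leftmost. *)

lemma persistent_graph_finite: "persistent_graph V E \<Longrightarrow> finite V"
  by (simp add: persistent_graph_def simple_graph_def)

lemma persistent_graph_sym: "persistent_graph V E \<Longrightarrow> E x y \<Longrightarrow> E y x"
  unfolding persistent_graph_def simple_graph_def by blast

lemma persistent_graph_consecutive: "persistent_graph V E \<Longrightarrow> consecutive V x y \<Longrightarrow> E x y"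
  unfolding persistent_graph_def by blast

lemma persistent_graph_X:
  "persistent_graph V E \<Longrightarrow> p < q \<Longrightarrow> q < r \<Longrightarrow> r < s \<Longrightarrow> E p r \<Longrightarrow> E q s \<Longrightarrow> E p s"
  unfolding persistent_graph_def simple_graph_def by blast

lemma persistent_graph_bar:
  "persistent_graph V E \<Longrightarrow> E p q \<Longrightarrow> p < q \<Longrightarrow> \<not> consecutive V p q \<Longrightarrow>
    \<exists>r\<in>V. p < r \<and> r < q \<and> E p r \<and> E r q"
  unfolding persistent_graph_def by blast

lemma consecutive_unique_right: "consecutive S x y \<Longrightarrow> consecutive S x z \<Longrightarrow> y = z"
  unfolding consecutive_def by (metis neqE)

lemma consecutive_unique_left: "consecutive S x z \<Longrightarrow> consecutive S y z \<Longrightarrow> x = y"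
  unfolding consecutive_def by (metis neqE)

lemma consecutive_interval: "consecutive {s\<in>S. a \<le> s \<and> s \<le> b} x y \<Longrightarrow> consecutive S x y"
  unfolding consecutive_def by force

lemma consecutive_exists_succ:
  assumes "finite S" "x \<in> S" "y \<in> S" "x < y"
  obtains z where "consecutive S x z" "z \<le> y"
proof
  let ?z = "Min {s\<in>S. x < s}"
  have "?z \<in> {s\<in>S. x < s}" using assms by (intro Min_in) auto
  moreover have "?z \<le> s" if "s \<in> S" "x < s" for s using assms that by (intro Min_le) auto
  ultimately show "consecutive S x ?z" using assms unfolding consecutive_def by (blast dest: leD)
  show "?z \<le> y" using assms by (intro Min_le) auto
qed

lemma consecutive_exists_pred:
  assumes "finite S" "x \<in> S" "y \<in> S" "x < y"
  obtains z where "consecutive S z y" "x \<le> z"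
proof
  let ?z = "Max {s\<in>S. s < y}"
  have "?z \<in> {s\<in>S. s < y}" using assms by (intro Max_in) auto
  moreover have "s \<le> ?z" if "s \<in> S" "s < y" for s using assms that by (intro Max_ge) auto
  ultimately show "consecutive S ?z y" using assms unfolding consecutive_def by (blast dest: leD)
  show "x \<le> ?z" using assms by (intro Max_ge) auto
qed

lemma consecutive_exists_between:
  assumes "finite S" "x \<in> S" "y \<in> S" "x < r" "r < y" "r \<notin> S"
  obtains a b where "consecutive S a b" "x \<le> a" "a < r" "r < b" "b \<le> y"
proof -
  define a where "a = Max {s\<in>S. s < r}"
  define b where "b = Min {s\<in>S. r < s}"
  have "a \<in> {s\<in>S. s < r}" unfolding a_def using assms by (intro Max_in) auto
  have "b \<in> {s\<in>S. r < s}" unfolding b_def using assms by (intro Min_in) auto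
  have "x \<le> a" unfolding a_def using assms by (intro Max_ge) auto
  have "b \<le> y" unfolding b_def using assms by (intro Min_le) auto
  have "\<not> (a < s \<and> s < b)" if "s \<in> S" for s
  proof
    assume "a < s \<and> s < b"
    moreover have "s \<le> a" if "s < r" using that \<open>s \<in> S\<close> \<open>finite S\<close> unfolding a_def by auto
    moreover have "b \<le> s" if "r < s" using that \<open>s \<in> S\<close> \<open>finite S\<close> unfolding b_def by auto
    ultimately show False using \<open>r \<notin> S\<close> \<open>s \<in> S\<close> by (metis leD linorder_neqE)
  qed
  then have "consecutive S a b"
    using \<open>a \<in> {s\<in>S. s < r}\<close> \<open>b \<in> {s\<in>S. r < s}\<close> unfolding consecutive_def by auto
  then show thesis
    using that \<open>a \<in> {s\<in>S. s < r}\<close> \<open>b \<in> {s\<in>S. r < s}\<close> \<open>x \<le> a\<close> \<open>b \<le> y\<close> by auto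
qed

definition monotone_path :: "('a::linorder \<Rightarrow> 'a \<Rightarrow> bool) \<Rightarrow> 'a set \<Rightarrow> 'a \<Rightarrow> 'a \<Rightarrow> bool" where
  "monotone_path E S a b \<longleftrightarrow> finite S \<and> a \<in> S \<and> b \<in> S \<and> (\<forall>s\<in>S. a \<le> s \<and> s \<le> b)
     \<and> (\<forall>x y. consecutive S x y \<longrightarrow> E x y)"

(* For card C \<ge> 4: C, listed increasingly, is an induced cycle closed by the edge ab. *)
definition monotone_cycle :: "('a::linorder \<Rightarrow> 'a \<Rightarrow> bool) \<Rightarrow> 'a set \<Rightarrow> 'a \<Rightarrow> 'a \<Rightarrow> bool" where
  "monotone_cycle E C a b \<longleftrightarrow> monotone_path E C a b \<and> E a b
     \<and> (\<forall>x\<in>C. \<forall>y\<in>C. x < y \<longrightarrow> E x y \<longrightarrow> consecutive C x y \<or> x = a \<and> y = b)"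

definition has_apex :: "('a::linorder \<Rightarrow> 'a \<Rightarrow> bool) \<Rightarrow> 'a set \<Rightarrow> 'a \<Rightarrow> 'a \<Rightarrow> bool" where
  "has_apex E S a b \<longleftrightarrow> (\<exists>y\<in>S. a < y \<and> y < b \<and> E a y \<and> E y b)"

lemma monotone_path_interval:
  assumes "monotone_path E S a b" "c \<in> S" "d \<in> S" "c \<le> d"
  shows "monotone_path E {s\<in>S. c \<le> s \<and> s \<le> d} c d"
  using assms consecutive_interval unfolding monotone_path_def by fastforce

lemma persistent_graph_monotone_path:
  assumes "persistent_graph V E" "a \<in> V" "b \<in> V" "a \<le> b"
  shows "monotone_path E {v\<in>V. a \<le> v \<and> v \<le> b} a b"
  using assms persistent_graph_finite persistent_graph_consecutive consecutive_interval
  unfolding monotone_path_def by fastforce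

lemma monotone_path_Un:
  assumes A: "monotone_path E A a b" and B: "monotone_path E B b c"
  shows "monotone_path E (A \<union> B) a c"
proof -
  have bA: "b \<in> A" and bB: "b \<in> B"
    and A_le: "\<forall>s\<in>A. a \<le> s \<and> s \<le> b" and B_ge: "\<forall>s\<in>B. b \<le> s \<and> s \<le> c"
    using A B unfolding monotone_path_def by auto
  have "consecutive A x y \<or> consecutive B x y" if xy: "consecutive (A \<union> B) x y" for x y
  proof (cases "y \<le> b")
    case True
    then have "x \<in> A \<and> y \<in> A"
      using xy bA B_ge unfolding consecutive_def by (metis Un_iff antisym leD order.strict_trans2)
    then show ?thesis using xy unfolding consecutive_def by blast
  next
    case False
    then have "b \<le> x" using xy bA unfolding consecutive_def by (metis UnI1 not_le)
    then have "x \<in> B \<and> y \<in> B"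
      using xy False bB A_le unfolding consecutive_def by (metis Un_iff antisym)
    then show ?thesis using xy unfolding consecutive_def by blast
  qed
  moreover have "\<forall>s\<in>A \<union> B. a \<le> s \<and> s \<le> c"
    using A_le B_ge bA bB by (meson Un_iff order_trans)
  ultimately show ?thesis using A B unfolding monotone_path_def by blast
qed

lemma monotone_path_shortcut:
  assumes "monotone_path E S a b" "x \<in> S" "y \<in> S" "x < y" "E x y"
  shows "monotone_path E {s\<in>S. s \<le> x \<or> y \<le> s} a b"
proof -
  let ?S = "{s\<in>S. s \<le> x \<or> y \<le> s}"
  have "u = x \<and> v = y \<or> consecutive S u v" if uv: "consecutive ?S u v" for u v
  proof (rule ccontr)
    assume "\<not> (u = x \<and> v = y \<or> consecutive S u v)"
    then obtain z where "z \<in> S" "u < z" "z < v" "u \<noteq> x \<or> v \<noteq> y"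
      using uv unfolding consecutive_def by auto
    then have "x < z" "z < y" using uv unfolding consecutive_def by auto
    then have "u \<le> x" "y \<le> v" using uv \<open>u < z\<close> \<open>z < v\<close> unfolding consecutive_def by auto
    then have "u < x \<and> x < v \<or> u < y \<and> y < v"
      using \<open>u \<noteq> x \<or> v \<noteq> y\<close> \<open>x < z\<close> \<open>z < v\<close> \<open>u < z\<close> \<open>z < y\<close> by auto
    then show False using uv assms(2,3) unfolding consecutive_def by auto
  qed
  then have "E u v" if "consecutive ?S u v" for u v
    using that assms(1,5) unfolding monotone_path_def by blast
  moreover have "a \<in> ?S" "b \<in> ?S" using assms unfolding monotone_path_def by auto
  ultimately show ?thesis using assms(1) unfolding monotone_path_def by auto
qed

lemma monotone_cycle_chord:
  "monotone_cycle E C a b \<Longrightarrow> x \<in> C \<Longrightarrow> y \<in> C \<Longrightarrow> x < y \<Longrightarrow> E x y \<Longrightarrow>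
    consecutive C x y \<or> x = a \<and> y = b"
  unfolding monotone_cycle_def by blast

lemma monotone_path_contains_monotone_cycle:
  assumes "monotone_path E S a b" "E a b" "x \<in> S" "a < x" "x < b"
  shows "\<exists>C\<subseteq>S. monotone_cycle E C a b \<and> (\<exists>x\<in>C. a < x \<and> x < b)"
  using assms
proof (induction "card S" arbitrary: S x rule: less_induct)
  case less
  show ?case
  proof (cases "monotone_cycle E S a b")
    case True
    then show ?thesis using less.prems by blast
  next
    case False
    then obtain u v where uv: "u \<in> S" "v \<in> S" "u < v" "E u v"
      "\<not> consecutive S u v" "\<not> (u = a \<and> v = b)"
      using less.prems unfolding monotone_cycle_def by blast
    define S' where "S' = {s\<in>S. s \<le> u \<or> v \<le> s}"
    have path: "monotone_path E S' a b"
      unfolding S'_def using monotone_path_shortcut less.prems(1) uv by blast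
    obtain z where "z \<in> S" "u < z" "z < v" using uv unfolding consecutive_def by auto
    then have "z \<notin> S'" by (auto simp: S'_def)
    then have "S' \<subset> S" using \<open>z \<in> S\<close> by (auto simp: S'_def)
    then have card: "card S' < card S"
      using less.prems(1) psubset_card_mono unfolding monotone_path_def by blast
    have "a \<le> u" "v \<le> b" using less.prems(1) uv unfolding monotone_path_def by auto
    then have "u \<in> S' \<and> a < u \<and> u < b \<or> v \<in> S' \<and> a < v \<and> v < b"
      using uv unfolding S'_def by auto
    then obtain C where "C \<subseteq> S'" "monotone_cycle E C a b" "\<exists>x\<in>C. a < x \<and> x < b"
      using less.hyps[OF card path less.prems(2)] by blast
    then show ?thesis using \<open>S' \<subset> S\<close> by blast
  qed
qed

lemma monotone_cycle_apex_free_path_left: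
  assumes pg: "persistent_graph V E" and CV: "C \<subseteq> V" and cyc: "monotone_cycle E C a b"
    and q: "consecutive C a q" and p: "consecutive C p b" and "q < p"
    and r: "r \<in> V" "a < r" "r < q" "E r b"
  obtains t S' where "a < t" "t < q" "E t b" "S' \<subseteq> V" "monotone_path E S' t b" "q \<in> S'"
    "\<not> has_apex E S' t b"
proof -
  have path: "monotone_path E C a b" and "E a q" "E p b"
    using cyc q p unfolding monotone_cycle_def monotone_path_def by auto
  have "a \<in> C" "q \<in> C" "p \<in> C" "b \<in> C" "a < p" "q < b" "p < b"
    using q p \<open>q < p\<close> unfolding consecutive_def by auto
  define t where "t = Max {v\<in>V. a < v \<and> v < q \<and> E v b}"
  have fin: "finite {v\<in>V. a < v \<and> v < q \<and> E v b}" using persistent_graph_finite[OF pg] by auto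
  have "t \<in> {v\<in>V. a < v \<and> v < q \<and> E v b}" unfolding t_def using fin r by (intro Max_in) auto
  then have t: "t \<in> V" "a < t" "t < q" "E t b" by auto
  have t_max: "\<not> E v b" if "v \<in> V" "t < v" "v < q" for v
  proof
    assume "E v b"
    then have "v \<le> t" unfolding t_def using fin that \<open>a < t\<close> by (intro Max_ge) auto
    then show False using that by simp
  qed
  define S' where "S' = {v\<in>V. t \<le> v \<and> v \<le> q} \<union> {c\<in>C. q \<le> c \<and> c \<le> b}"
  have "monotone_path E {v\<in>V. t \<le> v \<and> v \<le> q} t q"
    using persistent_graph_monotone_path[OF pg] t CV \<open>q \<in> C\<close> by auto
  moreover have "monotone_path E {c\<in>C. q \<le> c \<and> c \<le> b} q b"
    using monotone_path_interval[OF path \<open>q \<in> C\<close> \<open>b \<in> C\<close>] \<open>q < b\<close> by simp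
  ultimately have "monotone_path E S' t b" unfolding S'_def by (rule monotone_path_Un)
  moreover have "S' \<subseteq> V" "q \<in> S'" unfolding S'_def using CV \<open>q \<in> C\<close> \<open>t < q\<close> by auto
  moreover have "\<not> has_apex E S' t b"
  proof
    assume "has_apex E S' t b"
    then obtain x where x: "x \<in> S'" "t < x" "x < b" "E t x" "E x b" unfolding has_apex_def by blast
    have "q \<le> x" using x t_max unfolding S'_def by fastforce
    then have "x \<in> C" using x \<open>q \<in> C\<close> unfolding S'_def by (auto intro: antisym)
    then have "consecutive C x b"
      using monotone_cycle_chord[OF cyc \<open>x \<in> C\<close> \<open>b \<in> C\<close> \<open>x < b\<close> \<open>E x b\<close>] \<open>a < t\<close> \<open>t < x\<close> by auto
    then have "x = p" using p consecutive_unique_left by blast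
    then have "E a p" using persistent_graph_X[OF pg \<open>a < t\<close> \<open>t < q\<close> \<open>q < p\<close> \<open>E a q\<close>] x by blast
    then have "consecutive C a p"
      using monotone_cycle_chord[OF cyc \<open>a \<in> C\<close> \<open>p \<in> C\<close> \<open>a < p\<close>] \<open>p < b\<close> by blast
    then show False using q \<open>q < p\<close> unfolding consecutive_def by blast
  qed
  ultimately show thesis using that t by blast
qed

lemma monotone_cycle_apex_free_path_right:
  assumes pg: "persistent_graph V E" and CV: "C \<subseteq> V" and cyc: "monotone_cycle E C a b"
    and q: "consecutive C a q" and p: "consecutive C p b" and "q < p"
    and r: "r \<in> V" "p < r" "r < b" "E a r"
  obtains t S' where "p < t" "t < b" "E a t" "S' \<subseteq> V" "monotone_path E S' a t" "p \<in> S'"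
    "\<not> has_apex E S' a t"
proof -
  have path: "monotone_path E C a b" and "E a q" "E p b"
    using cyc q p unfolding monotone_cycle_def monotone_path_def by auto
  have "a \<in> C" "q \<in> C" "p \<in> C" "b \<in> C" "a < q" "a < p" "q < b"
    using q p \<open>q < p\<close> unfolding consecutive_def by auto
  define t where "t = Min {v\<in>V. p < v \<and> v < b \<and> E a v}"
  have fin: "finite {v\<in>V. p < v \<and> v < b \<and> E a v}" using persistent_graph_finite[OF pg] by auto
  have "t \<in> {v\<in>V. p < v \<and> v < b \<and> E a v}" unfolding t_def using fin r by (intro Min_in) auto
  then have t: "t \<in> V" "p < t" "t < b" "E a t" by auto
  have t_min: "\<not> E a v" if "v \<in> V" "p < v" "v < t" for v
  proof
    assume "E a v"
    then have "t \<le> v" unfolding t_def using fin that \<open>t < b\<close> by (intro Min_le) auto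
    then show False using that by simp
  qed
  define S' where "S' = {c\<in>C. a \<le> c \<and> c \<le> p} \<union> {v\<in>V. p \<le> v \<and> v \<le> t}"
  have "monotone_path E {c\<in>C. a \<le> c \<and> c \<le> p} a p"
    using monotone_path_interval[OF path \<open>a \<in> C\<close> \<open>p \<in> C\<close>] \<open>a < p\<close> by simp
  moreover have "monotone_path E {v\<in>V. p \<le> v \<and> v \<le> t} p t"
    using persistent_graph_monotone_path[OF pg] t CV \<open>p \<in> C\<close> by auto
  ultimately have "monotone_path E S' a t" unfolding S'_def by (rule monotone_path_Un)
  moreover have "S' \<subseteq> V" "p \<in> S'" unfolding S'_def using CV \<open>p \<in> C\<close> \<open>a < p\<close> by auto
  moreover have "\<not> has_apex E S' a t"
  proof
    assume "has_apex E S' a t"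
    then obtain x where x: "x \<in> S'" "a < x" "x < t" "E a x" "E x t" unfolding has_apex_def by blast
    have "x \<le> p" using x t_min unfolding S'_def by fastforce
    then have "x \<in> C" using x \<open>p \<in> C\<close> unfolding S'_def by (auto intro: antisym)
    then have "consecutive C a x"
      using monotone_cycle_chord[OF cyc \<open>a \<in> C\<close> \<open>x \<in> C\<close> \<open>a < x\<close> \<open>E a x\<close>] \<open>x < t\<close> \<open>t < b\<close> by auto
    then have "x = q" using q consecutive_unique_right by blast
    then have "E q b" using persistent_graph_X[OF pg \<open>q < p\<close> \<open>p < t\<close> \<open>t < b\<close> _ \<open>E p b\<close>] x by blast
    then have "consecutive C q b"
      using monotone_cycle_chord[OF cyc \<open>q \<in> C\<close> \<open>b \<in> C\<close> \<open>q < b\<close>] \<open>a < q\<close> by blast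
    then show False using p \<open>q < p\<close> unfolding consecutive_def by blast
  qed
  ultimately show thesis using that t by blast
qed

lemma monotone_cycle_no_inner_apex:
  assumes pg: "persistent_graph V E" and cyc: "monotone_cycle E C a b"
    and q: "consecutive C a q" and p: "consecutive C p b" and "q < p"
    and r: "q \<le> r" "r \<le> p" "E a r" "E r b"
  shows False
proof -
  have C: "a \<in> C" "q \<in> C" "p \<in> C" "b \<in> C" "a < q" "p < b"
    using q p unfolding consecutive_def by auto
  show False
  proof (cases "r \<in> C")
    case True
    have "a < r" "r < b" using C r by auto
    then have "consecutive C a r" "consecutive C r b"
      using monotone_cycle_chord[OF cyc \<open>a \<in> C\<close> True \<open>a < r\<close> \<open>E a r\<close>]
        monotone_cycle_chord[OF cyc True \<open>b \<in> C\<close> \<open>r < b\<close> \<open>E r b\<close>] by auto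
    then show False
      using q p \<open>q < p\<close> consecutive_unique_left consecutive_unique_right by blast
  next
    case False
    have "finite C" using cyc unfolding monotone_cycle_def monotone_path_def by blast
    moreover have "q < r" "r < p" using C r False by (auto simp: order.order_iff_strict)
    ultimately obtain c d where cd: "consecutive C c d" "q \<le> c" "c < r" "r < d" "d \<le> p"
      using consecutive_exists_between C False by metis
    have "E c d" using cd cyc unfolding monotone_cycle_def monotone_path_def by blast
    moreover have "d < b" using cd C by auto
    ultimately have "E c b" using persistent_graph_X[OF pg \<open>c < r\<close> \<open>r < d\<close> _ _ \<open>E r b\<close>] by blast
    moreover have "c \<in> C" "a < c" "c < b" using cd C unfolding consecutive_def by auto
    ultimately have "consecutive C c b"
      using monotone_cycle_chord[OF cyc \<open>c \<in> C\<close> \<open>b \<in> C\<close>] by blast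
    then show False using cd \<open>d < b\<close> unfolding consecutive_def by auto
  qed
qed

lemma card_interval_less:
  fixes V :: "'a::linorder set"
  assumes "finite V" "a \<in> V" "b \<in> V" "a \<le> b" "a \<le> a'" "b' \<le> b" "a < a' \<or> b' < b"
  shows "card {v\<in>V. a' \<le> v \<and> v \<le> b'} < card {v\<in>V. a \<le> v \<and> v \<le> b}"
proof (rule psubset_card_mono)
  show "finite {v\<in>V. a \<le> v \<and> v \<le> b}" using assms(1) by simp
  have "{v\<in>V. a' \<le> v \<and> v \<le> b'} \<subseteq> {v\<in>V. a \<le> v \<and> v \<le> b}"
    using order_trans[OF assms(5)] order_trans[OF _ assms(6)] by blast
  moreover have "a \<in> {v\<in>V. a \<le> v \<and> v \<le> b}" "b \<in> {v\<in>V. a \<le> v \<and> v \<le> b}"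
    using assms(2-4) by auto
  moreover have "a \<notin> {v\<in>V. a' \<le> v \<and> v \<le> b'} \<or> b \<notin> {v\<in>V. a' \<le> v \<and> v \<le> b'}"
    using assms(7) by auto
  ultimately show "{v\<in>V. a' \<le> v \<and> v \<le> b'} \<subset> {v\<in>V. a \<le> v \<and> v \<le> b}" by blast
qed

lemma monotone_path_has_apex:
  assumes pg: "persistent_graph V E"
  shows "S \<subseteq> V \<Longrightarrow> monotone_path E S a b \<Longrightarrow> E a b \<Longrightarrow> x \<in> S \<Longrightarrow> a < x \<Longrightarrow> x < b \<Longrightarrow>
    has_apex E S a b"
proof (induction "card {v\<in>V. a \<le> v \<and> v \<le> b}" arbitrary: S a b x rule: less_induct)
  case less
  obtain C w where C: "C \<subseteq> S" "monotone_cycle E C a b" and w: "w \<in> C" "a < w" "w < b"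
    using monotone_path_contains_monotone_cycle[OF less.prems(2-6)] by blast
  have "finite C" "a \<in> C" "b \<in> C" using C unfolding monotone_cycle_def monotone_path_def by auto
  obtain q where q: "consecutive C a q" "q \<le> w" using consecutive_exists_succ \<open>finite C\<close> \<open>a \<in> C\<close> w by metis
  obtain p where p: "consecutive C p b" "w \<le> p" using consecutive_exists_pred \<open>finite C\<close> \<open>b \<in> C\<close> w by metis
  have CV: "C \<subseteq> V" using C less.prems(1) by blast
  show ?case
  proof (cases "q = p")
    case True
    then have "E a q" "E q b" using C(2) q p unfolding monotone_cycle_def monotone_path_def by blast+
    then show ?thesis using q p True C(1) unfolding has_apex_def consecutive_def by blast
  next
    case False
    then have "q < p" using q p by simp
    have "q \<in> V" "a \<in> V" "b \<in> V" "a < q" "q < b" "a < p" "p < b" "a < b"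
      using q p \<open>q < p\<close> CV unfolding consecutive_def by auto
    then have "\<not> consecutive V a b" unfolding consecutive_def by blast
    then obtain r where r: "r \<in> V" "a < r" "r < b" "E a r" "E r b"
      using persistent_graph_bar[OF pg less.prems(3) \<open>a < b\<close>] by blast
    note span = card_interval_less[OF persistent_graph_finite[OF pg] \<open>a \<in> V\<close> \<open>b \<in> V\<close>
        less_imp_le[OF \<open>a < b\<close>]]
    consider "r < q" | "p < r" | "q \<le> r \<and> r \<le> p" by fastforce
    then have False
    proof cases
      case 1
      obtain t S' where "a < t" "t < q" "E t b" "S' \<subseteq> V" "monotone_path E S' t b" "q \<in> S'"
        "\<not> has_apex E S' t b"
        using monotone_cycle_apex_free_path_left[OF pg CV C(2) q(1) p(1) \<open>q < p\<close> r(1,2) 1 r(5)] by blast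
      then show False using less.hyps[OF span[of _ b]] \<open>q < b\<close> by fastforce
    next
      case 2
      obtain t S' where "p < t" "t < b" "E a t" "S' \<subseteq> V" "monotone_path E S' a t" "p \<in> S'"
        "\<not> has_apex E S' a t"
        using monotone_cycle_apex_free_path_right[OF pg CV C(2) q(1) p(1) \<open>q < p\<close> r(1) 2 r(3,4)] by blast
      then show False using less.hyps[OF span[of a]] \<open>a < p\<close> by fastforce
    next
      case 3
      then show False using monotone_cycle_no_inner_apex[OF pg C(2) q(1) p(1) \<open>q < p\<close>] r by blast
    qed
    then show ?thesis ..
  qed
qed

lemma persistent_graph_no_monotone_C4:
  assumes pg: "persistent_graph V E" and "w \<in> V" "x \<in> V" "y \<in> V" "z \<in> V"
    and C4: "induced_C4 E w x y z" and "w < x" "x < y" "y < z"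
  shows False
proof -
  have E: "E w x" "E x y" "E y z" "E w z" "\<not> E w y" "\<not> E x z"
    using C4 persistent_graph_sym[OF pg] unfolding induced_C4_def by blast+
  have "consecutive {w, x, y, z} u v \<Longrightarrow> E u v" for u v
    using E \<open>w < x\<close> \<open>x < y\<close> \<open>y < z\<close> unfolding consecutive_def by auto
  then have "monotone_path E {w, x, y, z} w z"
    using \<open>w < x\<close> \<open>x < y\<close> \<open>y < z\<close> unfolding monotone_path_def by auto
  moreover have "{w, x, y, z} \<subseteq> V" using assms(2-5) by simp
  ultimately have "has_apex E {w, x, y, z} w z"
    using monotone_path_has_apex[OF pg _ _ E(4), of _ x] \<open>w < x\<close> \<open>x < y\<close> \<open>y < z\<close> by auto
  then show False using E unfolding has_apex_def by auto
qed

lemma induced_C4_two_leftmost_from_least: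
  assumes pg: "persistent_graph V E" and V: "a \<in> V" "b \<in> V" "c \<in> V" "d \<in> V"
    and C4: "induced_C4 E a b c d" and "a < b" "a < c" "a < d"
  shows "two_leftmost {a, b, c, d} a c"
proof -
  have not_second: False if "induced_C4 E a b' c b''" "b' \<in> V" "b'' \<in> V" "a < b'" "b' < c" "b' < b''"
    for b' b''
  proof (cases "c < b''")
    case True
    then show False using persistent_graph_no_monotone_C4[OF pg \<open>a \<in> V\<close> that(2) \<open>c \<in> V\<close> that(3)] that
      by blast
  next
    case False
    then have "b'' < c" using that(1) unfolding induced_C4_def by auto
    then have "E a c"
      using persistent_graph_X[OF pg \<open>a < b'\<close> \<open>b' < b''\<close>] that(1) persistent_graph_sym[OF pg]
      unfolding induced_C4_def by blast
    then show False using that(1) unfolding induced_C4_def by blast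
  qed
  have reflected: "induced_C4 E a d c b"
    using C4 persistent_graph_sym[OF pg] unfolding induced_C4_def by auto
  have "b \<noteq> c" "c \<noteq> d" "b \<noteq> d" using C4 unfolding induced_C4_def by auto
  then have "c < b \<and> c < d"
    using not_second[OF C4 V(2,4) \<open>a < b\<close>] not_second[OF reflected V(4,2) \<open>a < d\<close>]
    by (metis linorder_neqE less_trans)
  then show ?thesis using \<open>a < b\<close> \<open>a < c\<close> \<open>a < d\<close> unfolding two_leftmost_def by auto
qed

theorem mainTheorem5:
  fixes V :: "'a::linorder set" and E :: "'a \<Rightarrow> 'a \<Rightarrow> bool"
  assumes "persistent_graph V E"
    and "p1 \<in> V" "p2 \<in> V" "p3 \<in> V" "p4 \<in> V"
    and "induced_C4 E p1 p2 p3 p4"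
  shows "two_leftmost {p1, p2, p3, p4} p1 p3 \<or> two_leftmost {p1, p2, p3, p4} p2 p4"
proof -
  note from_least = induced_C4_two_leftmost_from_least[OF assms(1)]
  have rotate: "induced_C4 E b c d a" if "induced_C4 E a b c d" for a b c d
    using that persistent_graph_sym[OF assms(1)] unfolding induced_C4_def by auto
  have commute: "two_leftmost P x y \<longleftrightarrow> two_leftmost P y x" for P :: "'a set" and x y
    unfolding two_leftmost_def by auto
  have "distinct [p1, p2, p3, p4]" using assms(6) unfolding induced_C4_def by blast
  then consider "p1 < p2 \<and> p1 < p3 \<and> p1 < p4" | "p2 < p1 \<and> p2 < p3 \<and> p2 < p4"
    | "p3 < p1 \<and> p3 < p2 \<and> p3 < p4" | "p4 < p1 \<and> p4 < p2 \<and> p4 < p3"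
    by (auto simp: neq_iff)
  then show ?thesis
  proof cases
    case 1
    then show ?thesis using from_least[OF assms(2-6)] by blast
  next
    case 2
    then have "two_leftmost {p2, p3, p4, p1} p2 p4" using from_least[OF assms(3-5,2)] rotate assms(6) by blast
    then show ?thesis by (simp add: insert_commute)
  next
    case 3
    then have "two_leftmost {p3, p4, p1, p2} p3 p1" using from_least[OF assms(4,5,2,3)] rotate assms(6) by blast
    then show ?thesis by (simp add: insert_commute commute)
  next
    case 4
    then have "two_leftmost {p4, p1, p2, p3} p4 p2" using from_least[OF assms(5,2-4)] rotate assms(6) by blast
    then show ?thesis by (simp add: insert_commute commute)
  qed
qed

end
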